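(* Let $T$ be an arbitrary triangle and let $\Gamma_{h,T}$ be an arbitrary open line segment with endpoints on $\partial T$ dividing $T$ into two nonempty open parts $T_h^+$ and $T_h^-$; let $\mathbf{n}_h$ be the unit normal of $\Gamma_{h,T}$ pointing into $T_h^+$. Let $w(\mathbf{x})=\operatorname{dist}(\mathbf{x},\Gamma_{h,T})$ for $\mathbf{x}\in T_h^+$ and $w(\mathbf{x})=0$ for $\mathbf{x}\in T_h^-$. Then $$0\le \nabla\pi^{CR}_{h,T}w\cdot\mathbf{n}_h\le 1.$$
   Context: $\pi^{CR}_{h,T}w$ is the unique linear polynomial on $T$ with $\int_{e_i}\pi^{CR}_{h,T}w=\int_{e_i}w$ for the three edges $e_i$ of $T$ (so $\nabla\pi^{CR}_{h,T}w$ is a constant vector). *)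

theory Defs
  imports "HOL-Analysis.Analysis"
begin

definition edge_integral :: "real^2 \<Rightarrow> real^2 \<Rightarrow> (real^2 \<Rightarrow> real) \<Rightarrow> real" where
  "edge_integral a b f = norm (b - a) * integral {0..1} (\<lambda>t. f (a + t *\<^sub>R (b - a)))"

text \<open>The Crouzeix--Raviart interpolant on the triangle with vertices a b c is the unique
  linear polynomial x \<mapsto> g \<bullet> x + d matching the edge integrals of w; this is its
  (constant) gradient g.\<close>
definition cr_grad :: "real^2 \<Rightarrow> real^2 \<Rightarrow> real^2 \<Rightarrow> (real^2 \<Rightarrow> real) \<Rightarrow> real^2" where
  "cr_grad a b c w = (THE g. \<exists>d.
      edge_integral a b (\<lambda>x. g \<bullet> x + d) = edge_integral a b w \<and>
      edge_integral b c (\<lambda>x. g \<bullet> x + d) = edge_integral b c w \<and>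
      edge_integral c a (\<lambda>x. g \<bullet> x + d) = edge_integral c a w)"

end

theory Submission
  imports Defs
begin

(* Let t be the unit tangent of the cut (t orthogonal to n) and, for a function f on the triangle,
   F(f) = sum over the edges [A,B] of ((B - A) . t) * (mean of f over [A,B]).
   Since F only sees edge means, F(w) = F(pi^CR w), and on an affine function F is K times the
   n-component of its gradient, where K = F(x |-> n . x) is a nonzero multiple of the area.
   Sorting the vertices by their t-coordinate and cutting the longest edge at the level of the
   middle vertex writes F(f) as a nonnegative combination of differences of means over segments
   that are translates of each other along n. Hence F(f) * K >= 0 whenever f is nondecreasing
   along n. Both w and x |-> n . x - w(x) are nondecreasing along n (w vanishes on the line of
   the cut and grows at most with unit speed along n), which gives 0 <= grad(pi^CR w) . n <= 1. *)

section \<open>Means over segments\<close>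

lemma integral_unit_interval_affine:
  fixes \<phi> :: "real \<Rightarrow> real"
  assumes "a < b" and "\<phi> integrable_on {a..b}"
  shows "integral {0..1} (\<lambda>t. \<phi> (a + t * (b - a))) = integral {a..b} \<phi> / (b - a)"
proof -
  have "((\<lambda>t. \<phi> ((b - a) *\<^sub>R t + a)) has_integral (1 / \<bar>b - a\<bar> ^ DIM(real)) *\<^sub>R integral {a..b} \<phi>)
          ((\<lambda>t. (1 / (b - a)) *\<^sub>R t + - ((1 / (b - a)) *\<^sub>R a)) ` cbox a b)"
    using assms by (intro has_integral_affinity) (auto simp: integrable_integral)
  moreover have "(\<lambda>t. t / (b - a) - a / (b - a)) ` {a..b} = {0..1}"
    using assms(1) unfolding image_affinity_atLeastAtMost_div_diff by (simp add: diff_divide_distrib[symmetric])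
  ultimately have "((\<lambda>t. \<phi> (a + t * (b - a))) has_integral integral {a..b} \<phi> / (b - a)) {0..1}"
    using assms(1) by (simp add: algebra_simps)
  then show ?thesis
    by (rule integral_unique)
qed

lemma integral_unit_interval_reflect:
  fixes \<phi> :: "real \<Rightarrow> real"
  shows "integral {0..1} (\<lambda>t. \<phi> (1 - t)) = integral {0..1} \<phi>"
proof -
  have "integral {0..1} (\<lambda>t. \<phi> (1 - t)) = integral {-1..0} (\<lambda>x. \<phi> (- x))"
    using integral_shift_real_ivl[where f="\<lambda>t. \<phi> (1 - t)" and a=0 and b=1 and c=1] by simp
  then show ?thesis
    using Henstock_Kurzweil_Integration.integral_reflect_real[where a=0 and b=1 and f=\<phi>] by simp
qed

lemma integral_unit_interval_split:
  fixes \<phi> :: "real \<Rightarrow> real"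
  assumes "continuous_on {0..1} \<phi>" and "0 \<le> \<tau>" "\<tau> \<le> 1"
  shows "integral {0..1} \<phi> = \<tau> * integral {0..1} (\<lambda>t. \<phi> (\<tau> * t))
          + (1 - \<tau>) * integral {0..1} (\<lambda>t. \<phi> (\<tau> + t * (1 - \<tau>)))"
proof -
  have int: "\<phi> integrable_on {0..1}"
    using assms(1) by (rule integrable_continuous_real)
  have "\<tau> * integral {0..1} (\<lambda>t. \<phi> (\<tau> * t)) = integral {0..\<tau>} \<phi>"
    using integral_unit_interval_affine[of 0 \<tau> \<phi>] integrable_subinterval_real[OF int] assms(2,3)
    by (cases "\<tau> = 0") (auto simp: mult.commute)
  moreover have "(1 - \<tau>) * integral {0..1} (\<lambda>t. \<phi> (\<tau> + t * (1 - \<tau>))) = integral {\<tau>..1} \<phi>"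
    using integral_unit_interval_affine[of \<tau> 1 \<phi>] integrable_subinterval_real[OF int] assms(2,3)
    by (cases "\<tau> = 1") auto
  ultimately show ?thesis
    using Henstock_Kurzweil_Integration.integral_combine[OF assms(2,3) int] by simp
qed

definition segment_mean :: "'a::real_normed_vector \<Rightarrow> 'a \<Rightarrow> ('a \<Rightarrow> real) \<Rightarrow> real" where
  "segment_mean A B f = integral {0..1} (\<lambda>t. f (A + t *\<^sub>R (B - A)))"

lemma edge_integral_eq_segment_mean: "edge_integral A B f = norm (B - A) * segment_mean A B f"
  by (simp add: edge_integral_def segment_mean_def)

lemma segment_point_in_closed_segment:
  fixes A B :: "'a::real_normed_vector"
  shows "0 \<le> t \<Longrightarrow> t \<le> 1 \<Longrightarrow> A + t *\<^sub>R (B - A) \<in> closed_segment A B"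
  by (auto simp: in_segment algebra_simps intro!: exI[of _ t])

lemma continuous_on_segment_param:
  fixes A B :: "'a::real_normed_vector"
  assumes "continuous_on (closed_segment A B) f"
  shows "continuous_on {0..1} (\<lambda>t. f (A + t *\<^sub>R (B - A)))"
proof (rule continuous_on_compose2[OF assms])
  show "continuous_on {0..1::real} (\<lambda>t. A + t *\<^sub>R (B - A))"
    by (intro continuous_intros)
qed (auto intro: segment_point_in_closed_segment)

lemma segment_mean_reverse: "segment_mean B A f = segment_mean A B f"
proof -
  have "(\<lambda>t. f (B + t *\<^sub>R (A - B))) = (\<lambda>t. (\<lambda>s. f (A + s *\<^sub>R (B - A))) (1 - t))"
    by (simp add: algebra_simps)
  then show ?thesis
    unfolding segment_mean_def
    using integral_unit_interval_reflect[of "\<lambda>s. f (A + s *\<^sub>R (B - A))"] by simp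
qed

lemma segment_mean_affine:
  fixes g :: "'a::real_inner"
  shows "segment_mean A B (\<lambda>x. g \<bullet> x + d) = (g \<bullet> A + g \<bullet> B) / 2 + d"
proof -
  have "((\<lambda>t. g \<bullet> A + d) has_integral g \<bullet> A + d) {0..1::real}"
    using has_integral_const_real[of "g \<bullet> A + d" 0 1] by simp
  from has_integral_add[OF this has_integral_mult_left[OF ident_has_integral]]
  have "((\<lambda>t. (g \<bullet> A + d) + t * (g \<bullet> (B - A))) has_integral (g \<bullet> A + d) + ((1\<^sup>2 - 0\<^sup>2) / 2) * (g \<bullet> (B - A))) {0..1}"
    by simp
  then have "((\<lambda>t. g \<bullet> (A + t *\<^sub>R (B - A)) + d) has_integral (g \<bullet> A + g \<bullet> B) / 2 + d) {0..1}"
    by (simp add: inner_add_right inner_diff_right algebra_simps add_divide_distrib)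
  then show ?thesis
    unfolding segment_mean_def by (rule integral_unique)
qed

lemma segment_mean_diff:
  assumes "continuous_on (closed_segment A B) f" "continuous_on (closed_segment A B) g"
  shows "segment_mean A B (\<lambda>x. f x - g x) = segment_mean A B f - segment_mean A B g"
  unfolding segment_mean_def
  by (intro integral_diff integrable_continuous_real continuous_on_segment_param assms)

lemma segment_mean_split:
  assumes "continuous_on (closed_segment A B) f" and "0 \<le> \<tau>" "\<tau> \<le> 1"
    and "u = A + \<tau> *\<^sub>R (B - A)"
  shows "segment_mean A B f = \<tau> * segment_mean A u f + (1 - \<tau>) * segment_mean u B f"
  using integral_unit_interval_split[OF continuous_on_segment_param[OF assms(1)] assms(2,3)]
  unfolding segment_mean_def assms(4) by (simp add: algebra_simps)

definition monotone_along :: "'a::real_vector set \<Rightarrow> 'a \<Rightarrow> ('a \<Rightarrow> real) \<Rightarrow> bool" where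
  "monotone_along H n f \<longleftrightarrow> (\<forall>x t. x \<in> H \<longrightarrow> 0 \<le> t \<longrightarrow> x + t *\<^sub>R n \<in> H \<longrightarrow> f x \<le> f (x + t *\<^sub>R n))"

lemma segment_mean_mono_translate:
  assumes "monotone_along H n f" "continuous_on H f" "convex H"
    and "A \<in> H" "B \<in> H" "A' \<in> H" "B' \<in> H"
    and "A' = A + \<alpha> *\<^sub>R n" "B' = B + \<beta> *\<^sub>R n" "0 \<le> \<alpha>" "0 \<le> \<beta>"
  shows "segment_mean A B f \<le> segment_mean A' B' f"
  unfolding segment_mean_def
proof (rule integral_le)
  have "closed_segment A B \<subseteq> H" "closed_segment A' B' \<subseteq> H"
    using assms(3-7) by (simp_all add: closed_segment_subset)
  then show "(\<lambda>t. f (A + t *\<^sub>R (B - A))) integrable_on {0..1}"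
    "(\<lambda>t. f (A' + t *\<^sub>R (B' - A'))) integrable_on {0..1}"
    by (auto intro!: integrable_continuous_real continuous_on_segment_param continuous_on_subset[OF assms(2)])
  fix t :: real
  assume t: "t \<in> {0..1}"
  have "A' + t *\<^sub>R (B' - A') = (A + t *\<^sub>R (B - A)) + ((1 - t) * \<alpha> + t * \<beta>) *\<^sub>R n"
    using assms(8,9) by (simp add: algebra_simps)
  moreover have "A + t *\<^sub>R (B - A) \<in> H" "A' + t *\<^sub>R (B' - A') \<in> H"
    using t assms(3-7) segment_point_in_closed_segment closed_segment_subset by (metis atLeastAtMost_iff subsetD)+
  moreover have "0 \<le> (1 - t) * \<alpha> + t * \<beta>"
    using t assms(10,11) by auto
  ultimately show "f (A + t *\<^sub>R (B - A)) \<le> f (A' + t *\<^sub>R (B' - A'))"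
    using assms(1) unfolding monotone_along_def by metis
qed

section \<open>A boundary functional on triangles\<close>

(* For m = rot90 n this is, up to orientation, the boundary integral of f (n . nu) with nu the
   outer normal, i.e. the integral over the triangle of the derivative of f along n. *)
definition boundary_flux :: "'a::real_inner \<Rightarrow> 'a \<Rightarrow> 'a \<Rightarrow> 'a \<Rightarrow> ('a \<Rightarrow> real) \<Rightarrow> real" where
  "boundary_flux a b c m f =
     ((b - a) \<bullet> m) * segment_mean a b f + ((c - b) \<bullet> m) * segment_mean b c f
     + ((a - c) \<bullet> m) * segment_mean c a f"

lemma boundary_flux_permute:
  "boundary_flux b c a m f = boundary_flux a b c m f"
  "boundary_flux c a b m f = boundary_flux a b c m f"
  "boundary_flux a c b m f = - boundary_flux a b c m f"
  "boundary_flux b a c m f = - boundary_flux a b c m f"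
  "boundary_flux c b a m f = - boundary_flux a b c m f"
  unfolding boundary_flux_def
  using segment_mean_reverse[of a b f] segment_mean_reverse[of b c f] segment_mean_reverse[of c a f]
  by (simp_all add: inner_diff_left algebra_simps)

lemma boundary_flux_diff:
  assumes "convex H" "{a, b, c} \<subseteq> H" "continuous_on H f" "continuous_on H g"
  shows "boundary_flux a b c m (\<lambda>x. f x - g x) = boundary_flux a b c m f - boundary_flux a b c m g"
proof -
  have mean_diff: "segment_mean A B (\<lambda>x. f x - g x) = segment_mean A B f - segment_mean A B g"
    if "A \<in> H" "B \<in> H" for A B
    using closed_segment_subset[OF that assms(1)]
    by (intro segment_mean_diff continuous_on_subset[OF assms(3)] continuous_on_subset[OF assms(4)])
  have abc: "a \<in> H" "b \<in> H" "c \<in> H"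
    using assms(2) by auto
  show ?thesis
    unfolding boundary_flux_def mean_diff[OF abc(1,2)] mean_diff[OF abc(2,3)] mean_diff[OF abc(3,1)]
    by (simp add: algebra_simps)
qed

definition rot90 :: "real^2 \<Rightarrow> real^2" where
  "rot90 n = vector [- (n$2), n$1]"

definition cross2 :: "real^2 \<Rightarrow> real^2 \<Rightarrow> real" where
  "cross2 u v = u$1 * v$2 - u$2 * v$1"

lemma inner_real2: "x \<bullet> y = x$1 * y$1 + x$2 * y$2" for x y :: "real^2"
  by (simp add: inner_vec_def sum_2)

lemma inner_rot90: "x \<bullet> rot90 n = x$2 * n$1 - x$1 * n$2"
  by (simp add: inner_real2 rot90_def)

lemma rot90_decompose:
  assumes "n \<bullet> n = 1"
  shows "x = (x \<bullet> rot90 n) *\<^sub>R rot90 n + (x \<bullet> n) *\<^sub>R n"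
proof -
  have "n$1 * n$1 + n$2 * n$2 = 1"
    using assms by (simp add: inner_real2)
  then show ?thesis
    unfolding vec_eq_iff forall_2 by (simp add: rot90_def inner_real2) algebra
qed

lemma boundary_flux_affine:
  "boundary_flux a b c (rot90 n) (\<lambda>x. g \<bullet> x + d) = - cross2 (a - b) (c - b) / 2 * (g \<bullet> n)"
  unfolding boundary_flux_def segment_mean_affine inner_rot90
  unfolding cross2_def inner_real2 by (simp add: field_simps)

(* u is the point of the long edge [v1, v3] at the same m-level as v2, so that the pieces
   [v1, u] and [u, v3] lie opposite the short edges [v1, v2] and [v2, v3]. *)
lemma boundary_flux_split_long_edge:
  fixes v1 v2 v3 m :: "'a::real_inner"
  assumes sorted: "v1 \<bullet> m \<le> v2 \<bullet> m" "v2 \<bullet> m \<le> v3 \<bullet> m" "v1 \<bullet> m < v3 \<bullet> m"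
    and H: "convex H" "{v1, v2, v3} \<subseteq> H" and f: "continuous_on H f"
  defines "u \<equiv> v1 + ((v2 - v1) \<bullet> m / ((v3 - v1) \<bullet> m)) *\<^sub>R (v3 - v1)"
  shows "u \<in> H" and "(u - v2) \<bullet> m = 0"
    and "boundary_flux v1 v2 v3 m f
      = ((v2 - v1) \<bullet> m) * (segment_mean v1 v2 f - segment_mean v1 u f)
        + ((v3 - v2) \<bullet> m) * (segment_mean v2 v3 f - segment_mean u v3 f)"
proof -
  define \<tau> where "\<tau> = (v2 - v1) \<bullet> m / ((v3 - v1) \<bullet> m)"
  have d31: "0 < (v3 - v1) \<bullet> m"
    using sorted by (simp add: inner_diff_left)
  have \<tau>: "0 \<le> \<tau>" "\<tau> \<le> 1"
    using sorted d31 unfolding \<tau>_def by (auto simp: divide_simps inner_diff_left)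
  have u: "u = v1 + \<tau> *\<^sub>R (v3 - v1)"
    unfolding u_def \<tau>_def ..
  have segment: "closed_segment v1 v3 \<subseteq> H"
    using H by (simp add: closed_segment_subset)
  then show "u \<in> H"
    using segment_point_in_closed_segment[OF \<tau>] u by blast
  have weight1: "\<tau> * ((v3 - v1) \<bullet> m) = (v2 - v1) \<bullet> m"
    using d31 unfolding \<tau>_def by simp
  then have weight2: "(1 - \<tau>) * ((v3 - v1) \<bullet> m) = (v3 - v2) \<bullet> m"
    by (simp add: algebra_simps inner_diff_left)
  have "(u - v2) \<bullet> m = (v1 - v2) \<bullet> m + \<tau> * ((v3 - v1) \<bullet> m)"
    unfolding u by (simp add: algebra_simps inner_diff_left inner_add_left)
  then show "(u - v2) \<bullet> m = 0"
    unfolding weight1 by (simp add: inner_diff_left)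
  have long_edge: "segment_mean v1 v3 f = \<tau> * segment_mean v1 u f + (1 - \<tau>) * segment_mean u v3 f"
    using segment \<tau> u by (intro segment_mean_split continuous_on_subset[OF f])
  have "((v3 - v1) \<bullet> m) * segment_mean v1 v3 f
      = (\<tau> * ((v3 - v1) \<bullet> m)) * segment_mean v1 u f + ((1 - \<tau>) * ((v3 - v1) \<bullet> m)) * segment_mean u v3 f"
    unfolding long_edge by (simp add: algebra_simps)
  then have "((v3 - v1) \<bullet> m) * segment_mean v1 v3 f
      = ((v2 - v1) \<bullet> m) * segment_mean v1 u f + ((v3 - v2) \<bullet> m) * segment_mean u v3 f"
    unfolding weight1 weight2 .
  then show "boundary_flux v1 v2 v3 m f
      = ((v2 - v1) \<bullet> m) * (segment_mean v1 v2 f - segment_mean v1 u f)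
        + ((v3 - v2) \<bullet> m) * (segment_mean v2 v3 f - segment_mean u v3 f)"
    unfolding boundary_flux_def segment_mean_reverse[of v3 v1]
    by (simp add: inner_diff_left algebra_simps)
qed

lemma boundary_flux_sorted_sign:
  fixes v1 v2 v3 n :: "real^2"
  assumes n: "n \<bullet> n = 1"
    and sorted: "v1 \<bullet> rot90 n \<le> v2 \<bullet> rot90 n" "v2 \<bullet> rot90 n \<le> v3 \<bullet> rot90 n"
      "v1 \<bullet> rot90 n < v3 \<bullet> rot90 n"
    and H: "convex H" "{v1, v2, v3} \<subseteq> H"
    and f: "continuous_on H f" "monotone_along H n f"
  defines "u \<equiv> v1 + ((v2 - v1) \<bullet> rot90 n / ((v3 - v1) \<bullet> rot90 n)) *\<^sub>R (v3 - v1)"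
  shows "0 \<le> (u - v2) \<bullet> n \<Longrightarrow> boundary_flux v1 v2 v3 (rot90 n) f \<le> 0"
    and "(u - v2) \<bullet> n \<le> 0 \<Longrightarrow> 0 \<le> boundary_flux v1 v2 v3 (rot90 n) f"
proof -
  note split = boundary_flux_split_long_edge[OF sorted H f(1), folded u_def]
  define \<kappa> where "\<kappa> = (u - v2) \<bullet> n"
  have u_v2: "u = v2 + \<kappa> *\<^sub>R n"
    using rot90_decompose[OF n, of "u - v2"] split(2) unfolding \<kappa>_def by (simp add: algebra_simps)
  have vH: "v1 \<in> H" "v2 \<in> H" "v3 \<in> H"
    using H(2) by auto
  have weights: "0 \<le> (v2 - v1) \<bullet> rot90 n" "0 \<le> (v3 - v2) \<bullet> rot90 n"
    using sorted by (simp_all add: inner_diff_left)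
  note translate = segment_mean_mono_translate[OF f(2,1) H(1)]
  show "boundary_flux v1 v2 v3 (rot90 n) f \<le> 0" if "0 \<le> (u - v2) \<bullet> n"
  proof -
    have "segment_mean v1 v2 f \<le> segment_mean v1 u f" "segment_mean v2 v3 f \<le> segment_mean u v3 f"
      using translate[OF vH(1,2,1) split(1), of 0 \<kappa>] translate[OF vH(2,3) split(1) vH(3), of \<kappa> 0]
        u_v2 that unfolding \<kappa>_def by simp_all
    then show ?thesis
      using weights unfolding split(3) by (simp add: add_nonpos_nonpos mult_nonneg_nonpos)
  qed
  show "0 \<le> boundary_flux v1 v2 v3 (rot90 n) f" if "(u - v2) \<bullet> n \<le> 0"
  proof -
    have v2_u: "v2 = u + (- \<kappa>) *\<^sub>R n"
      using u_v2 by simp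
    have "segment_mean v1 u f \<le> segment_mean v1 v2 f" "segment_mean u v3 f \<le> segment_mean v2 v3 f"
      using translate[OF vH(1) split(1) vH(1,2), of 0 "- \<kappa>"] translate[OF split(1) vH(3,2,3), of "- \<kappa>" 0]
        v2_u that unfolding \<kappa>_def by simp_all
    then show ?thesis
      using weights unfolding split(3) by simp
  qed
qed

lemma boundary_flux_sorted_same_sign:
  fixes v1 v2 v3 n :: "real^2"
  assumes n: "n \<bullet> n = 1"
    and sorted: "v1 \<bullet> rot90 n \<le> v2 \<bullet> rot90 n" "v2 \<bullet> rot90 n \<le> v3 \<bullet> rot90 n"
    and H: "convex H" "{v1, v2, v3} \<subseteq> H"
    and f: "continuous_on H f" "monotone_along H n f"
    and g: "continuous_on H g" "monotone_along H n g"
  shows "0 \<le> boundary_flux v1 v2 v3 (rot90 n) f * boundary_flux v1 v2 v3 (rot90 n) g"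
proof (cases "v1 \<bullet> rot90 n = v3 \<bullet> rot90 n")
  case True
  then have "v1 \<bullet> rot90 n = v2 \<bullet> rot90 n" "v2 \<bullet> rot90 n = v3 \<bullet> rot90 n"
    using sorted by auto
  then show ?thesis
    by (simp add: boundary_flux_def inner_diff_left)
next
  case False
  then have strict: "v1 \<bullet> rot90 n < v3 \<bullet> rot90 n"
    using sorted by linarith
  note F = boundary_flux_sorted_sign[OF n sorted strict H f]
  note G = boundary_flux_sorted_sign[OF n sorted strict H g]
  show ?thesis
    using F G by (metis linear mult_nonneg_nonneg mult_nonpos_nonpos)
qed

lemma boundary_flux_same_sign:
  fixes a b c n :: "real^2"
  assumes n: "n \<bullet> n = 1" and H: "convex H" "{a, b, c} \<subseteq> H"
    and f: "continuous_on H f" "monotone_along H n f"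
    and g: "continuous_on H g" "monotone_along H n g"
  shows "0 \<le> boundary_flux a b c (rot90 n) f * boundary_flux a b c (rot90 n) g"
proof -
  define P where "P x y z = boundary_flux x y z (rot90 n) f * boundary_flux x y z (rot90 n) g" for x y z
  have sorted: "0 \<le> P x y z"
    if "{x, y, z} = {a, b, c}" "x \<bullet> rot90 n \<le> y \<bullet> rot90 n" "y \<bullet> rot90 n \<le> z \<bullet> rot90 n" for x y z
    unfolding P_def using that H by (intro boundary_flux_sorted_same_sign[OF n _ _ H(1) _ f g]) auto
  have perm: "P b c a = P a b c" "P c a b = P a b c" "P a c b = P a b c" "P b a c = P a b c" "P c b a = P a b c"
    unfolding P_def by (metis boundary_flux_permute minus_mult_minus)+
  consider "a \<bullet> rot90 n \<le> b \<bullet> rot90 n" "b \<bullet> rot90 n \<le> c \<bullet> rot90 n"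
    | "b \<bullet> rot90 n \<le> c \<bullet> rot90 n" "c \<bullet> rot90 n \<le> a \<bullet> rot90 n"
    | "c \<bullet> rot90 n \<le> a \<bullet> rot90 n" "a \<bullet> rot90 n \<le> b \<bullet> rot90 n"
    | "a \<bullet> rot90 n \<le> c \<bullet> rot90 n" "c \<bullet> rot90 n \<le> b \<bullet> rot90 n"
    | "b \<bullet> rot90 n \<le> a \<bullet> rot90 n" "a \<bullet> rot90 n \<le> c \<bullet> rot90 n"
    | "c \<bullet> rot90 n \<le> b \<bullet> rot90 n" "b \<bullet> rot90 n \<le> a \<bullet> rot90 n"
    by linarith
  then have "0 \<le> P a b c"
    by cases (use sorted[of a b c] sorted[of b c a] sorted[of c a b] sorted[of a c b] sorted[of b a c]
        sorted[of c b a] perm in \<open>simp_all add: insert_commute\<close>)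
  then show ?thesis
    unfolding P_def .
qed

section \<open>The Crouzeix-Raviart gradient\<close>

lemma cross2_neq_0_if_not_collinear:
  fixes a b c :: "real^2"
  assumes "\<not> collinear {a, b, c}"
  shows "cross2 (a - b) (c - b) \<noteq> 0"
proof
  define x where "x = a - b"
  define y where "y = c - b"
  assume "cross2 (a - b) (c - b) = 0"
  then have xy: "x$1 * y$2 = x$2 * y$1"
    unfolding x_def y_def cross2_def by simp
  have "collinear {0, x, y}"
  proof (cases "x = 0")
    case False
    then consider "x$1 \<noteq> 0" | "x$2 \<noteq> 0"
      by (auto simp: vec_eq_iff forall_2)
    then have "\<exists>k. y = k *\<^sub>R x"
    proof cases
      case 1
      then show ?thesis
        using xy by (intro exI[of _ "y$1 / x$1"]) (auto simp: vec_eq_iff forall_2 field_simps)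
    next
      case 2
      then show ?thesis
        using xy by (intro exI[of _ "y$2 / x$2"]) (auto simp: vec_eq_iff forall_2 field_simps)
    qed
    then show ?thesis
      by (simp add: collinear_lemma)
  qed (simp add: collinear_lemma)
  then have "collinear {a, b, c}"
    unfolding x_def y_def by (simp add: collinear_3)
  with assms show False ..
qed

lemma ex1_inner_eq_pair:
  fixes x y :: "real^2"
  assumes D: "cross2 x y \<noteq> 0"
  shows "\<exists>!g. g \<bullet> x = r \<and> g \<bullet> y = s"
proof (rule ex_ex1I)
  define g :: "real^2" where
    "g = vector [(r * y$2 - s * x$2) / cross2 x y, (s * x$1 - r * y$1) / cross2 x y]"
  have "g \<bullet> x = ((r * y$2 - s * x$2) * x$1 + (s * x$1 - r * y$1) * x$2) / cross2 x y"
       "g \<bullet> y = ((r * y$2 - s * x$2) * y$1 + (s * x$1 - r * y$1) * y$2) / cross2 x y"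
    unfolding g_def inner_real2 by (simp_all add: add_divide_distrib)
  moreover have "(r * y$2 - s * x$2) * x$1 + (s * x$1 - r * y$1) * x$2 = r * cross2 x y"
       "(r * y$2 - s * x$2) * y$1 + (s * x$1 - r * y$1) * y$2 = s * cross2 x y"
    unfolding cross2_def by algebra+
  ultimately have "g \<bullet> x = r" "g \<bullet> y = s"
    using D by simp_all
  then show "\<exists>g. g \<bullet> x = r \<and> g \<bullet> y = s"
    by auto
next
  fix g h :: "real^2"
  assume "g \<bullet> x = r \<and> g \<bullet> y = s" "h \<bullet> x = r \<and> h \<bullet> y = s"
  then have zx: "(g - h) \<bullet> x = 0" and zy: "(g - h) \<bullet> y = 0"
    by (simp_all add: inner_diff_left)
  have "(g - h)$1 * cross2 x y = y$2 * ((g - h) \<bullet> x) - x$2 * ((g - h) \<bullet> y)"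
       "(g - h)$2 * cross2 x y = x$1 * ((g - h) \<bullet> y) - y$1 * ((g - h) \<bullet> x)"
    unfolding inner_real2 cross2_def by algebra+
  then have "(g - h)$1 = 0" "(g - h)$2 = 0"
    using zx zy D by simp_all
  then show "g = h"
    by (simp add: vec_eq_iff forall_2)
qed

lemma affine_edge_means_iff:
  fixes g a b c :: "'a::real_inner"
  shows "(\<exists>d. (g \<bullet> a + g \<bullet> b) / 2 + d = \<alpha>\<^sub>1 \<and> (g \<bullet> b + g \<bullet> c) / 2 + d = \<alpha>\<^sub>2
              \<and> (g \<bullet> c + g \<bullet> a) / 2 + d = \<alpha>\<^sub>3)
         \<longleftrightarrow> g \<bullet> (a - b) = 2 * (\<alpha>\<^sub>3 - \<alpha>\<^sub>2) \<and> g \<bullet> (c - b) = 2 * (\<alpha>\<^sub>3 - \<alpha>\<^sub>1)"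
proof
  assume "g \<bullet> (a - b) = 2 * (\<alpha>\<^sub>3 - \<alpha>\<^sub>2) \<and> g \<bullet> (c - b) = 2 * (\<alpha>\<^sub>3 - \<alpha>\<^sub>1)"
  then have ga: "g \<bullet> a = g \<bullet> b + 2 * (\<alpha>\<^sub>3 - \<alpha>\<^sub>2)" and gc: "g \<bullet> c = g \<bullet> b + 2 * (\<alpha>\<^sub>3 - \<alpha>\<^sub>1)"
    by (auto simp: inner_diff_right)
  show "\<exists>d. (g \<bullet> a + g \<bullet> b) / 2 + d = \<alpha>\<^sub>1 \<and> (g \<bullet> b + g \<bullet> c) / 2 + d = \<alpha>\<^sub>2
              \<and> (g \<bullet> c + g \<bullet> a) / 2 + d = \<alpha>\<^sub>3"
    by (intro exI[of _ "\<alpha>\<^sub>2 - (g \<bullet> b + g \<bullet> c) / 2"]) (simp add: ga gc field_simps)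
qed (auto simp: inner_diff_right field_simps)

lemma cr_grad_edge_means:
  fixes a b c :: "real^2"
  assumes "\<not> collinear {a, b, c}"
  obtains d where "segment_mean a b (\<lambda>x. cr_grad a b c w \<bullet> x + d) = segment_mean a b w"
    "segment_mean b c (\<lambda>x. cr_grad a b c w \<bullet> x + d) = segment_mean b c w"
    "segment_mean c a (\<lambda>x. cr_grad a b c w \<bullet> x + d) = segment_mean c a w"
proof -
  have "a \<noteq> b" "b \<noteq> c" "c \<noteq> a"
    using assms by (auto simp: insert_commute)
  then have edge_eqs: "(edge_integral a b (\<lambda>x. g \<bullet> x + d) = edge_integral a b w \<and>
      edge_integral b c (\<lambda>x. g \<bullet> x + d) = edge_integral b c w \<and>
      edge_integral c a (\<lambda>x. g \<bullet> x + d) = edge_integral c a w)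
    \<longleftrightarrow> (segment_mean a b (\<lambda>x. g \<bullet> x + d) = segment_mean a b w \<and>
      segment_mean b c (\<lambda>x. g \<bullet> x + d) = segment_mean b c w \<and>
      segment_mean c a (\<lambda>x. g \<bullet> x + d) = segment_mean c a w)" for g d
    unfolding edge_integral_eq_segment_mean by simp
  have "\<exists>!g. \<exists>d. edge_integral a b (\<lambda>x. g \<bullet> x + d) = edge_integral a b w \<and>
      edge_integral b c (\<lambda>x. g \<bullet> x + d) = edge_integral b c w \<and>
      edge_integral c a (\<lambda>x. g \<bullet> x + d) = edge_integral c a w"
    unfolding edge_eqs segment_mean_affine affine_edge_means_iff
    by (rule ex1_inner_eq_pair[OF cross2_neq_0_if_not_collinear[OF assms]])
  then have "\<exists>d. edge_integral a b (\<lambda>x. cr_grad a b c w \<bullet> x + d) = edge_integral a b w \<and>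
      edge_integral b c (\<lambda>x. cr_grad a b c w \<bullet> x + d) = edge_integral b c w \<and>
      edge_integral c a (\<lambda>x. cr_grad a b c w \<bullet> x + d) = edge_integral c a w"
    unfolding cr_grad_def by (rule theI')
  then show ?thesis
    using that unfolding edge_eqs by blast
qed

lemma boundary_flux_eq_cr_grad:
  fixes a b c n :: "real^2"
  assumes "\<not> collinear {a, b, c}"
  shows "boundary_flux a b c (rot90 n) w = - cross2 (a - b) (c - b) / 2 * (cr_grad a b c w \<bullet> n)"
proof -
  obtain d where means: "segment_mean a b (\<lambda>x. cr_grad a b c w \<bullet> x + d) = segment_mean a b w"
    "segment_mean b c (\<lambda>x. cr_grad a b c w \<bullet> x + d) = segment_mean b c w"
    "segment_mean c a (\<lambda>x. cr_grad a b c w \<bullet> x + d) = segment_mean c a w"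
    using cr_grad_edge_means[OF assms] .
  have "boundary_flux a b c (rot90 n) w = boundary_flux a b c (rot90 n) (\<lambda>x. cr_grad a b c w \<bullet> x + d)"
    unfolding boundary_flux_def means ..
  then show ?thesis
    unfolding boundary_flux_affine .
qed

lemma cr_grad_normal_component_bounds:
  fixes a b c n :: "real^2"
  assumes tri: "\<not> collinear {a, b, c}" and n: "n \<bullet> n = 1"
    and H: "convex H" "{a, b, c} \<subseteq> H"
    and w: "continuous_on H w" "monotone_along H n w" "monotone_along H n (\<lambda>x. n \<bullet> x - w x)"
  shows "0 \<le> cr_grad a b c w \<bullet> n \<and> cr_grad a b c w \<bullet> n \<le> 1"
proof -
  define K where "K = - cross2 (a - b) (c - b) / 2"
  define \<gamma> where "\<gamma> = cr_grad a b c w \<bullet> n"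
  have height: "continuous_on H (\<lambda>x. n \<bullet> x)" "monotone_along H n (\<lambda>x. n \<bullet> x)"
    using n by (auto simp: monotone_along_def inner_add_right intro: continuous_intros)
  have flux_n: "boundary_flux a b c (rot90 n) (\<lambda>x. n \<bullet> x) = K"
    using boundary_flux_affine[of a b c n n 0] n unfolding K_def by simp
  have flux_w: "boundary_flux a b c (rot90 n) w = K * \<gamma>"
    unfolding boundary_flux_eq_cr_grad[OF tri] K_def \<gamma>_def ..
  have "0 \<le> boundary_flux a b c (rot90 n) w * boundary_flux a b c (rot90 n) (\<lambda>x. n \<bullet> x)"
    by (rule boundary_flux_same_sign[OF n H w(1,2) height])
  then have "0 \<le> \<gamma> * K\<^sup>2"
    unfolding flux_w flux_n by (simp add: power2_eq_square algebra_simps)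
  moreover have "0 \<le> boundary_flux a b c (rot90 n) (\<lambda>x. n \<bullet> x - w x) * boundary_flux a b c (rot90 n) (\<lambda>x. n \<bullet> x)"
    using w(1,3) height by (intro boundary_flux_same_sign[OF n H]) (auto intro: continuous_intros)
  then have "0 \<le> (1 - \<gamma>) * K\<^sup>2"
    unfolding boundary_flux_diff[OF H height(1) w(1)] flux_w flux_n by (simp add: power2_eq_square algebra_simps)
  moreover have "0 < K\<^sup>2"
    using cross2_neq_0_if_not_collinear[OF tri] unfolding K_def by simp
  ultimately show ?thesis
    unfolding \<gamma>_def by (simp add: zero_le_mult_iff)
qed

section \<open>Distance to the cut\<close>

(* For s < 0, p would lie strictly between the interior point midpoint p q and the point
   p + s (q - p) of closure H, and hence be interior. *)
lemma chord_line_param_nonneg: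
  fixes p q :: "'a::euclidean_space"
  assumes "convex H" "p \<notin> interior H" "p \<noteq> q" "open_segment p q \<subseteq> interior H"
    and "p + s *\<^sub>R (q - p) \<in> closure H"
  shows "0 \<le> s"
proof (rule ccontr)
  assume "\<not> 0 \<le> s"
  define e where "e = 2 * s / (2 * s - 1)"
  have e: "0 < e" "e \<le> 1"
    using \<open>\<not> 0 \<le> s\<close> unfolding e_def by (auto simp: divide_simps)
  have "midpoint p q \<in> interior H"
    using assms(3,4) by auto
  moreover have "midpoint p q = p + (1 / 2) *\<^sub>R (q - p)"
    unfolding midpoint_def by (simp add: algebra_simps flip: scaleR_add_left)
  moreover have "(p + s *\<^sub>R v) - e *\<^sub>R ((p + s *\<^sub>R v) - (p + (1 / 2) *\<^sub>R v))
      = p + (s - e * (s - 1 / 2)) *\<^sub>R v" for v :: 'a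
    by (simp add: algebra_simps)
  ultimately have "p + (s - e * (s - 1 / 2)) *\<^sub>R (q - p) \<in> interior H"
    using mem_interior_closure_convex_shrink[OF assms(1) _ assms(5) e] by metis
  moreover have "s - e * (s - 1 / 2) = 0"
    using \<open>\<not> 0 \<le> s\<close> unfolding e_def by (simp add: field_simps)
  ultimately show False
    using assms(2) by simp
qed

lemma chord_line_in_segment:
  fixes p q :: "'a::euclidean_space"
  assumes "convex H" "p \<notin> interior H" "q \<notin> interior H" "p \<noteq> q" "open_segment p q \<subseteq> interior H"
    and "p + s *\<^sub>R (q - p) \<in> closure H"
  shows "p + s *\<^sub>R (q - p) \<in> closed_segment p q"
proof -
  have "0 \<le> s"
    using chord_line_param_nonneg[OF assms(1,2,4,5,6)] .
  moreover have "0 \<le> 1 - s"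
    using assms(4-6)
    by (intro chord_line_param_nonneg[OF assms(1,3), of p]) (auto simp: open_segment_commute algebra_simps)
  ultimately show ?thesis
    by (simp add: segment_point_in_closed_segment)
qed

lemma infdist_chord_line_eq_0:
  fixes p q n x :: "real^2"
  assumes "convex H" "p \<notin> interior H" "q \<notin> interior H" "p \<noteq> q" "open_segment p q \<subseteq> interior H"
    and n: "n \<bullet> n = 1" "n \<bullet> (q - p) = 0"
    and x: "x \<in> closure H" "(x - p) \<bullet> n = 0"
  shows "infdist x (open_segment p q) = 0"
proof -
  define m where "m = rot90 n"
  define \<alpha> \<beta> where "\<alpha> = (q - p) \<bullet> m" and "\<beta> = (x - p) \<bullet> m"
  have qp: "q - p = \<alpha> *\<^sub>R m" and xp: "x - p = \<beta> *\<^sub>R m"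
    using rot90_decompose[OF n(1), of "q - p"] rot90_decompose[OF n(1), of "x - p"] n(2) x(2)
    unfolding m_def \<alpha>_def \<beta>_def by (simp_all add: inner_commute)
  then have "\<alpha> \<noteq> 0"
    using assms(4) by auto
  then have "x = p + (\<beta> / \<alpha>) *\<^sub>R (q - p)"
    unfolding qp by (simp add: xp[symmetric])
  then have "x \<in> closure (open_segment p q)"
    using chord_line_in_segment[OF assms(1-5)] x(1) assms(4) by (metis closure_open_segment)
  moreover have "open_segment p q \<noteq> {}"
    using assms(4) midpoint_in_open_segment by blast
  ultimately show ?thesis
    using in_closure_iff_infdist_zero by blast
qed

definition one_sided_infdist :: "'a::real_inner \<Rightarrow> 'a \<Rightarrow> 'a set \<Rightarrow> 'a \<Rightarrow> real" where
  "one_sided_infdist p n S x = (if 0 < (x - p) \<bullet> n then infdist x S else 0)"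

lemma continuous_on_one_sided_infdist:
  assumes "\<forall>x\<in>H. (x - p) \<bullet> n = 0 \<longrightarrow> infdist x S = 0"
  shows "continuous_on H (one_sided_infdist p n S)"
proof -
  have "one_sided_infdist p n S = (\<lambda>x. if (x - p) \<bullet> n \<le> 0 then 0 else infdist x S)"
    by (auto simp: fun_eq_iff one_sided_infdist_def)
  then show ?thesis
    using assms by (auto intro!: continuous_on_cases_le continuous_intros continuous_on_infdist)
qed

lemma infdist_le_infdist_translate:
  fixes x n :: "'a::real_inner"
  assumes "\<forall>z\<in>S. 0 \<le> (x - z) \<bullet> n" "0 \<le> t"
  shows "infdist x S \<le> infdist (x + t *\<^sub>R n) S"
proof (cases "S = {}")
  case False
  have "dist x z \<le> dist (x + t *\<^sub>R n) z" if "z \<in> S" for z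
  proof -
    have "(x + t *\<^sub>R n - z) \<bullet> (x + t *\<^sub>R n - z) = (x - z) \<bullet> (x - z) + 2 * t * ((x - z) \<bullet> n) + t\<^sup>2 * (n \<bullet> n)"
      by (simp add: inner_add_left inner_add_right inner_diff_left inner_diff_right inner_commute
          algebra_simps power2_eq_square)
    then show ?thesis
      using assms that unfolding dist_norm norm_le by simp
  qed
  then show ?thesis
    unfolding infdist_notempty[OF False]
    by (intro cINF_mono False) (auto intro: bdd_belowI[of _ 0])
qed (simp add: infdist_def)

lemma one_sided_infdist_translate:
  fixes p n :: "'a::real_inner" and S :: "'a set"
  defines "w \<equiv> one_sided_infdist p n S"
  assumes n: "n \<bullet> n = 1" and "convex H"
    and S: "\<forall>z\<in>S. (z - p) \<bullet> n = 0" and line: "\<forall>x\<in>H. (x - p) \<bullet> n = 0 \<longrightarrow> infdist x S = 0"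
    and x: "x \<in> H" "0 \<le> t" "x + t *\<^sub>R n \<in> H"
  shows "w x \<le> w (x + t *\<^sub>R n)" and "w (x + t *\<^sub>R n) \<le> w x + t"
proof -
  define h where "h = (x - p) \<bullet> n"
  have level: "(x + s *\<^sub>R n - p) \<bullet> n = h + s" for s
    unfolding h_def using n by (simp add: inner_add_left inner_diff_left)
  have "norm n = 1"
    using n by (simp add: norm_eq_1)
  then have dist: "dist (x + s *\<^sub>R n) (x + s' *\<^sub>R n) = \<bar>s - s'\<bar>" for s s'
    by simp
  consider "0 < h" | "h \<le> 0" "0 < h + t" | "h + t \<le> 0"
    by linarith
  then have "w x \<le> w (x + t *\<^sub>R n) \<and> w (x + t *\<^sub>R n) \<le> w x + t"
  proof cases
    case 1
    then have "\<forall>z\<in>S. 0 \<le> (x - z) \<bullet> n"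
      using S unfolding h_def by (simp add: inner_diff_left)
    then have "infdist x S \<le> infdist (x + t *\<^sub>R n) S"
      using infdist_le_infdist_translate x(2) by blast
    moreover have "infdist (x + t *\<^sub>R n) S \<le> infdist x S + t"
      using infdist_triangle[of "x + t *\<^sub>R n" S x] dist[of t 0] x(2) by simp
    ultimately show ?thesis
      using 1 level[of t] level[of 0] x(2) unfolding w_def one_sided_infdist_def by simp
  next
    case 2
    define z where "z = x + (- h) *\<^sub>R n"
    have "z \<in> closed_segment x (x + t *\<^sub>R n)"
      using 2 segment_point_in_closed_segment[of "- h / t" x "x + t *\<^sub>R n"]
      unfolding z_def by (simp add: divide_simps)
    then have "z \<in> H"
      using closed_segment_subset[OF x(1,3) \<open>convex H\<close>] by blast
    then have "infdist z S = 0"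
      using line level[of "- h"] unfolding z_def by simp
    then have "infdist (x + t *\<^sub>R n) S \<le> t"
      using infdist_triangle[of "x + t *\<^sub>R n" S z] dist[of t "- h"] 2 unfolding z_def by simp
    then show ?thesis
      using 2 level[of t] level[of 0] unfolding w_def one_sided_infdist_def by (simp add: infdist_nonneg)
  next
    case 3
    then show ?thesis
      using level[of t] level[of 0] x(2) unfolding w_def one_sided_infdist_def by simp
  qed
  then show "w x \<le> w (x + t *\<^sub>R n)" "w (x + t *\<^sub>R n) \<le> w x + t"
    by simp_all
qed

lemma one_sided_infdist_chord:
  fixes p q n :: "real^2"
  assumes H: "convex H" "closed H" and pq: "p \<notin> interior H" "q \<notin> interior H" "p \<noteq> q"
    and chord: "open_segment p q \<subseteq> interior H" and n: "n \<bullet> n = 1" "n \<bullet> (q - p) = 0"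
  defines "w \<equiv> one_sided_infdist p n (open_segment p q)"
  shows "continuous_on H w" "monotone_along H n w" "monotone_along H n (\<lambda>x. n \<bullet> x - w x)"
proof -
  have line: "\<forall>x\<in>H. (x - p) \<bullet> n = 0 \<longrightarrow> infdist x (open_segment p q) = 0"
    using infdist_chord_line_eq_0[OF H(1) pq chord n] closure_subset by blast
  have "\<forall>z\<in>open_segment p q. (z - p) \<bullet> n = 0"
  proof
    fix z
    assume "z \<in> open_segment p q"
    then obtain u where "z = (1 - u) *\<^sub>R p + u *\<^sub>R q"
      by (auto simp: in_segment)
    then have "z - p = u *\<^sub>R (q - p)"
      by (simp add: algebra_simps)
    then show "(z - p) \<bullet> n = 0"
      using n(2) by (simp add: inner_commute)
  qed
  note translate = one_sided_infdist_translate[OF n(1) H(1) this line]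
  show "continuous_on H w"
    unfolding w_def using line by (rule continuous_on_one_sided_infdist)
  show "monotone_along H n w"
    unfolding monotone_along_def w_def using translate(1) by blast
  have "n \<bullet> (x + t *\<^sub>R n) = n \<bullet> x + t" for x t
    using n(1) by (simp add: inner_add_right)
  then show "monotone_along H n (\<lambda>x. n \<bullet> x - w x)"
    unfolding monotone_along_def w_def using translate(2) by fastforce
qed

theorem lemma4p3:
  fixes a b c p q n :: "real^2" and T Tplus Tminus :: "(real^2) set" and w :: "real^2 \<Rightarrow> real"
  assumes tri: "\<not> collinear {a, b, c}"
    and T_def: "T = interior (convex hull {a, b, c})"
    and pq: "p \<noteq> q" "p \<in> frontier T" "q \<in> frontier T"
    and seg: "open_segment p q \<subseteq> T"
    and n_unit: "norm n = 1" and n_orth: "n \<bullet> (q - p) = 0"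
    and Tplus_def: "Tplus = {x \<in> T. (x - p) \<bullet> n > 0}"
    and Tminus_def: "Tminus = {x \<in> T. (x - p) \<bullet> n < 0}"
    and nonempty: "Tplus \<noteq> {}" "Tminus \<noteq> {}"
    and w_def: "w = (\<lambda>x. if (x - p) \<bullet> n > 0 then infdist x (open_segment p q) else 0)"
  shows "0 \<le> cr_grad a b c w \<bullet> n \<and> cr_grad a b c w \<bullet> n \<le> 1"
proof -
  define H where "H = convex hull {a, b, c}"
  have H: "convex H" "closed H" "{a, b, c} \<subseteq> H"
    unfolding H_def by (auto simp: compact_imp_closed finite_imp_compact_convex_hull hull_inc)
  have "p \<notin> interior H" "q \<notin> interior H"
    using pq(2,3) frontier_interior_subset[of H] H(2) unfolding T_def H_def[symmetric]
    by (auto simp: frontier_def)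
  moreover have "n \<bullet> n = 1"
    using n_unit by (simp add: norm_eq_1)
  moreover have "w = one_sided_infdist p n (open_segment p q)"
    unfolding w_def one_sided_infdist_def ..
  ultimately show ?thesis
    using one_sided_infdist_chord[OF H(1,2) _ _ pq(1) _ _ n_orth] seg
    by (intro cr_grad_normal_component_bounds[OF tri _ H(1,3)]) (auto simp: T_def H_def)
qed

end
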